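(* Let $n\ge0$ be an integer, $N=2^{n+1}$, and consider the 1D-Tree over the uniform dataset $\{0,\dots,N-1\}$ (described in the context). Let $s$ be a real number with $1<s\le N$, $\kappa=\lfloor\log_2(N/s)\rfloor$ (so $2^{n-\kappa}<s\le2^{n-\kappa+1}$), and $Q=[x,x+s)$ with $x\in[0,N-s]$. Then $\mathrm{level}_{\mathrm{Tree}}(Q)\in\{0,\dots,\kappa\}$, and: (i) for $\ell\in\{0,\dots,\kappa-1\}$, $\mathrm{level}_{\mathrm{Tree}}(Q)=\ell$ if $x\in\bigl(m2^{n-\ell}-s,\ m2^{n-\ell}\bigr)$ for some odd $m\in\{1,3,\dots,2^{\ell+1}-1\}$ (that is, if $Q$ straddles a primitive boundary point of level $\ell+1$ but no primitive boundary point of level $\le\ell$); (ii) $\mathrm{level}_{\mathrm{Tree}}(Q)=\kappa$ if $x\in\bigl[m2^{n-\kappa+1},\ (m+1)2^{n-\kappa+1}-s\bigr]$ for some $m\in\{0,1,\dots,2^\kappa-1\}$.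
   Context: The 1D-Tree over $\mathcal{D}=\{0,\dots,N-1\}\subset[0,N)$ has levels $\ell=0,\dots,n+1$; its level-$\ell$ nodes are the $2^\ell$ intervals $[m2^{n-\ell+1},(m+1)2^{n-\ell+1})$, $m=0,\dots,2^\ell-1$; each node's children are its left and right halves. SRC-search returns the deepest node whose interval contains $Q$; $\mathrm{level}_{\mathrm{Tree}}(Q)$ is its level. A primitive boundary point of level $\ell$ is the point splitting a level-$(\ell-1)$ node into its two children, i.e. an odd multiple of $2^{n-\ell+1}$. $Q=[x,x+s)$ straddles a point $p$ if $x<p<x+s$. *)

theory Defs
  imports Complex_Main
begin

text \<open>1D-Tree over the dataset {0,...,N-1}, N = 2^(n+1). The level-l nodes (l = 0..n+1)
  are the intervals [m 2^(n-l+1), (m+1) 2^(n-l+1)), m = 0..2^l-1.\<close>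

definition tree_node :: "nat \<Rightarrow> nat \<Rightarrow> nat \<Rightarrow> real set" where
  "tree_node n l m = {real m * 2 ^ (n + 1 - l) ..< real (m + 1) * 2 ^ (n + 1 - l)}"

definition query :: "real \<Rightarrow> real \<Rightarrow> real set" where
  "query x s = {x ..< x + s}"

definition node_contains_at_level :: "nat \<Rightarrow> nat \<Rightarrow> real \<Rightarrow> real \<Rightarrow> bool" where
  "node_contains_at_level n l x s \<longleftrightarrow>
     l \<le> n + 1 \<and> (\<exists>m < 2 ^ l. query x s \<subseteq> tree_node n l m)"

text \<open>SRC-search returns the deepest node containing Q; level_Tree is its level.\<close>
definition level_Tree :: "nat \<Rightarrow> real \<Rightarrow> real \<Rightarrow> nat" where
  "level_Tree n x s = (GREATEST l. node_contains_at_level n l x s)"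

end

theory Submission
  imports Defs
begin

text \<open>Nodes at level \<open>l\<close> are the aligned intervals of length \<open>2^(n+1-l)\<close>, so \<open>Q\<close> lies in
  a level-\<open>l\<close> node iff \<open>Q\<close> fits into one aligned cell, i.e. iff \<open>Q\<close> straddles no multiple of
  \<open>2^(n+1-l)\<close>. Since \<open>s > 2^(n-\<kappa>)\<close>, no node below level \<open>\<kappa>\<close> is long enough to contain
  \<open>Q\<close>. In case (i) \<open>Q\<close> lies in the level-\<open>l\<close> node whose midpoint it straddles, and that
  midpoint is a multiple of every finer cell length, which rules out all deeper levels. In
  case (ii) \<open>Q\<close> lies in a level-\<open>\<kappa>\<close> node by assumption.\<close>

lemma query_subset_tree_node_iff:
  assumes "0 < s"
  shows "query x s \<subseteq> tree_node n l m \<longleftrightarrow>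
    real m * 2 ^ (n + 1 - l) \<le> x \<and> x + s \<le> real (m + 1) * 2 ^ (n + 1 - l)"
  using assms atLeastLessThan_subset_iff[of x "x + s"]
  unfolding query_def tree_node_def by (auto simp del: of_nat_Suc)

lemma node_contains_at_level_iff:
  assumes "0 < s"
  shows "node_contains_at_level n l x s \<longleftrightarrow> l \<le> n + 1 \<and>
    (\<exists>m < 2 ^ l. real m * 2 ^ (n + 1 - l) \<le> x \<and> x + s \<le> real (m + 1) * 2 ^ (n + 1 - l))"
  unfolding node_contains_at_level_def query_subset_tree_node_iff[OF assms] ..

lemma node_contains_at_level_imp_le:
  assumes "0 < s" "node_contains_at_level n l x s"
  shows "s \<le> 2 ^ (n + 1 - l)"
  using assms by (auto simp: node_contains_at_level_iff algebra_simps)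

lemma not_node_contains_at_level_if_straddles:
  assumes "x < real j * 2 ^ (n + 1 - l)" "real j * 2 ^ (n + 1 - l) < x + s"
  shows "\<not> node_contains_at_level n l x s"
proof
  assume "node_contains_at_level n l x s"
  then obtain m where "real m * 2 ^ (n + 1 - l) \<le> x" "x + s \<le> real (m + 1) * 2 ^ (n + 1 - l)"
    using assms by (auto simp: node_contains_at_level_iff)
  with assms have "real m * 2 ^ (n + 1 - l) < real j * 2 ^ (n + 1 - l)"
    "real j * 2 ^ (n + 1 - l) < real (m + 1) * 2 ^ (n + 1 - l)"
    by linarith+
  then have "m < j" "j < m + 1"
    by (simp_all only: mult_less_cancel_right_pos zero_less_power zero_less_numeral of_nat_less_iff)
  then show False by linarith
qed

lemma level_Tree_eqI:
  assumes "node_contains_at_level n l x s"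
    and "\<And>l'. l < l' \<Longrightarrow> \<not> node_contains_at_level n l' x s"
  shows "level_Tree n x s = l"
  unfolding level_Tree_def using assms by (intro Greatest_equality) (auto simp: not_less[symmetric])

lemma node_contains_at_level_Tree:
  assumes "node_contains_at_level n 0 x s"
  shows "node_contains_at_level n (level_Tree n x s) x s"
  unfolding level_Tree_def
  by (rule GreatestI_nat[where P = "\<lambda>l. node_contains_at_level n l x s" and b = "n + 1", OF assms]) (simp add: node_contains_at_level_def)

lemma not_node_contains_below_size:
  assumes "2 ^ (n - k) < s" "k < l"
  shows "\<not> node_contains_at_level n l x s"
proof
  assume contains: "node_contains_at_level n l x s"
  then have "l \<le> n + 1" by (simp add: node_contains_at_level_def)
  then have "(2::real) ^ (n + 1 - l) \<le> 2 ^ (n - k)"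
    using \<open>k < l\<close> by (intro power_increasing) auto
  moreover have "0 < s" by (rule less_trans[OF zero_less_power assms(1)]) simp
  ultimately show False
    using node_contains_at_level_imp_le[OF _ contains] assms(1) by linarith
qed

lemma level_Tree_le:
  assumes "2 ^ (n - k) < s" "0 \<le> x" "x + s \<le> 2 ^ (n + 1)"
  shows "level_Tree n x s \<le> k"
proof -
  have "0 < s" by (rule less_trans[OF zero_less_power assms(1)]) simp
  then have "node_contains_at_level n 0 x s"
    using assms by (auto simp: node_contains_at_level_iff)
  then show ?thesis
    using node_contains_at_level_Tree not_node_contains_below_size[OF assms(1)] not_le by blast
qed

lemma level_Tree_aligned:
  assumes "2 ^ (n - k) < s" "k \<le> n + 1" "m < 2 ^ k"
    and "real m * 2 ^ (n + 1 - k) \<le> x" "x + s \<le> real (m + 1) * 2 ^ (n + 1 - k)"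
  shows "level_Tree n x s = k"
proof (rule level_Tree_eqI)
  have "0 < s" by (rule less_trans[OF zero_less_power assms(1)]) simp
  then show "node_contains_at_level n k x s"
    using assms by (auto simp: node_contains_at_level_iff)
qed (use not_node_contains_below_size[OF assms(1)] in blast)

lemma level_Tree_straddles_midpoint:
  assumes "l \<le> n" "s \<le> 2 ^ (n - l)" "odd m" "m < 2 ^ (l + 1)"
    and "real m * 2 ^ (n - l) - s < x" "x < real m * 2 ^ (n - l)"
  shows "level_Tree n x s = l"
proof (rule level_Tree_eqI)
  obtain k where m: "m = 2 * k + 1" using \<open>odd m\<close> oddE by blast
  have cell: "(2::real) ^ (n + 1 - l) = 2 * 2 ^ (n - l)"
    using \<open>l \<le> n\<close> by (simp add: Suc_diff_le)
  have "0 < s" using assms(5,6) by linarith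
  moreover have "k < 2 ^ l" using \<open>m < 2 ^ (l + 1)\<close> m by simp
  moreover have "real k * 2 ^ (n + 1 - l) \<le> x" "x + s \<le> real (k + 1) * 2 ^ (n + 1 - l)"
    using assms unfolding cell m by (auto simp: algebra_simps)
  ultimately show "node_contains_at_level n l x s"
    using assms by (auto simp: node_contains_at_level_iff)
next
  fix l' assume "l < l'"
  show "\<not> node_contains_at_level n l' x s"
  proof (cases "l' \<le> n + 1")
    case True
    then have "(2::real) ^ (n - l) = 2 ^ (l' - l - 1) * 2 ^ (n + 1 - l')"
      using \<open>l < l'\<close> by (simp flip: power_add)
    then have p: "real m * 2 ^ (n - l) = real (m * 2 ^ (l' - l - 1)) * 2 ^ (n + 1 - l')"
      by simp
    show ?thesis
      by (rule not_node_contains_at_level_if_straddles[where j = "m * 2 ^ (l' - l - 1)"])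
        (use p assms(5,6) in linarith)+
  qed (simp add: node_contains_at_level_def)
qed

lemma floor_log_bounds:
  assumes "1 < s" "s \<le> 2 ^ (n + 1)" "k = nat \<lfloor>log 2 (2 ^ (n + 1) / s)\<rfloor>"
  shows "k \<le> n" "2 ^ (n - k) < s" "s \<le> 2 ^ (n + 1 - k)"
proof -
  define r where "r = 2 ^ (n + 1) / s"
  have "1 \<le> r" "r < 2 ^ (n + 1)"
    using assms(1,2) by (simp_all add: r_def divide_less_eq)
  then have "\<lfloor>log 2 r\<rfloor> = int k"
    using assms(3) by (simp add: r_def)
  then have "2 powr real k \<le> r" "r < 2 powr (real k + 1)"
    using \<open>1 \<le> r\<close> by (simp_all add: floor_log_eq_powr_iff)
  then have "2 ^ k \<le> r" "r < 2 ^ (k + 1)"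
    by (simp_all add: powr_add powr_realpow)
  from \<open>2 ^ k \<le> r\<close> \<open>r < 2 ^ (n + 1)\<close> show "k \<le> n"
    using power_strict_increasing_iff[of "2::real" k "n + 1"] by simp
  then have "(2::real) ^ (n + 1) = 2 ^ (n + 1 - k) * 2 ^ k" "(2::real) ^ (n + 1) = 2 ^ (n - k) * 2 ^ (k + 1)"
    by (simp_all flip: power_add)
  with \<open>2 ^ k \<le> r\<close> \<open>r < 2 ^ (k + 1)\<close> assms(1) show "2 ^ (n - k) < s" "s \<le> 2 ^ (n + 1 - k)"
    by (simp_all add: r_def field_simps)
qed

theorem lemma3:
  fixes n \<kappa> :: nat and s x :: real
  assumes "1 < s" and "s \<le> 2 ^ (n + 1)"
    and "\<kappa> = nat \<lfloor>log 2 (2 ^ (n + 1) / s)\<rfloor>"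
    and "0 \<le> x" and "x \<le> 2 ^ (n + 1) - s"
  shows "level_Tree n x s \<le> \<kappa>
    \<and> (\<forall>l < \<kappa>. \<forall>m::nat. odd m \<and> m \<le> 2 ^ (l + 1) - 1
          \<and> real m * 2 ^ (n - l) - s < x \<and> x < real m * 2 ^ (n - l)
          \<longrightarrow> level_Tree n x s = l)
    \<and> (\<forall>m::nat. m \<le> 2 ^ \<kappa> - 1
          \<and> real m * 2 ^ (n + 1 - \<kappa>) \<le> x \<and> x \<le> real (m + 1) * 2 ^ (n + 1 - \<kappa>) - s
          \<longrightarrow> level_Tree n x s = \<kappa>)"
proof -
  note \<kappa> = floor_log_bounds[OF assms(1-3)]
  show ?thesis
  proof (intro conjI allI impI)
  show "level_Tree n x s \<le> \<kappa>"
    using level_Tree_le[OF \<kappa>(2)] assms(4,5) by simp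
next
  fix l m :: nat
  assume "l < \<kappa>" and m: "odd m \<and> m \<le> 2 ^ (l + 1) - 1
    \<and> real m * 2 ^ (n - l) - s < x \<and> x < real m * 2 ^ (n - l)"
  have "(2::real) ^ (n + 1 - \<kappa>) \<le> 2 ^ (n - l)"
    using \<open>l < \<kappa>\<close> by (intro power_increasing) auto
  then have "s \<le> 2 ^ (n - l)" using \<kappa>(3) by linarith
  moreover have "m < 2 ^ (l + 1)"
    using m by (metis Suc_pred' le_imp_less_Suc pos2 zero_less_power)
  ultimately show "level_Tree n x s = l"
    using level_Tree_straddles_midpoint[of l n s m x] \<kappa> \<open>l < \<kappa>\<close> m by simp
next
  fix m :: nat
  assume m: "m \<le> 2 ^ \<kappa> - 1
    \<and> real m * 2 ^ (n + 1 - \<kappa>) \<le> x \<and> x \<le> real (m + 1) * 2 ^ (n + 1 - \<kappa>) - s"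
  then have "m < 2 ^ \<kappa>"
    by (metis Suc_pred' le_imp_less_Suc pos2 zero_less_power)
  then show "level_Tree n x s = \<kappa>"
    using level_Tree_aligned[OF \<kappa>(2)] \<kappa>(1) m by simp
  qed
qed

end
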